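(* In the i.d. model, suppose $\mathbb{E}X_i^\gamma<\infty$ for some $\gamma\ge1$. Then there exists a nondecreasing function $\rho$ such that $$\max\Big(\mathbb{P}\{\mathbb{1}_{\{t\le T_j\}}\ne\mathbb{1}_{\{t\le T_j^{(M)}\}}\},\ \mathbb{P}\{T_j\ne T_j^{(M)},\,T_j^{(M)}\le t\}\Big)\le\rho(t)M^{1-\gamma}$$ for all $t\in(0,1)$, $j\in\mathbb{Z}$, $M\in\mathbb{N}$. Moreover, for every $t<1$ the left-hand side is $o(M^{1-\gamma})$ as $M\to\infty$.
   Context: $(X_i)_{i\in\mathbb{Z}}$ are i.i.d. nonnegative random variables with $\mathbb{E}X_i=1$. For $p,q\ge1$, $j\in\mathbb{Z}$, $s\ge0$ put $F_{p,j,q}(s)=\frac1p\sum_{i=1}^{p-1}(p-i)X_{j+i+1}+\frac1q\sum_{i=1}^{q-1}(q-i)X_{j-i+1}+X_{j+1}-\frac{p+q}{2}s^2$ (empty sums are $0$); this is decreasing in $s\ge0$ and nonnegative at $0$, so $F_{p,j,q}(s)=0$ has a unique root $s\ge0$. Define $T_j:=\inf_{k,l\ge1}\{s\ge0:F_{k,j,l}(s)=0\}$ and $T_j^{(M)}:=\min_{1\le k,l\le M}\{s\ge0:F_{k,j,l}(s)=0\}$ for $M\in\mathbb{N}$. *)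

theory Defs
  imports "HOL-Probability.Probability" "HOL-Library.Landau_Symbols"
begin

text \<open>F_{p,j,q}(s) for a fixed realisation x of the sequence (X_i).\<close>
definition Ffun :: "(int \<Rightarrow> real) \<Rightarrow> nat \<Rightarrow> int \<Rightarrow> nat \<Rightarrow> real \<Rightarrow> real" where
  "Ffun x p j q s =
     (1 / real p) * (\<Sum>i\<in>{1..<p}. real (p - i) * x (j + int i + 1))
   + (1 / real q) * (\<Sum>i\<in>{1..<q}. real (q - i) * x (j - int i + 1))
   + x (j + 1) - (real p + real q) / 2 * s\<^sup>2"

definition Froot :: "(int \<Rightarrow> real) \<Rightarrow> nat \<Rightarrow> int \<Rightarrow> nat \<Rightarrow> real" where
  "Froot x p j q = (THE s. s \<ge> 0 \<and> Ffun x p j q s = 0)"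

definition Tinf :: "(int \<Rightarrow> real) \<Rightarrow> int \<Rightarrow> real" where
  "Tinf x j = Inf {Froot x k j l | k l. k \<ge> 1 \<and> l \<ge> 1}"

definition TM :: "(int \<Rightarrow> real) \<Rightarrow> nat \<Rightarrow> int \<Rightarrow> real" where
  "TM x M j = Min {Froot x k j l | k l. 1 \<le> k \<and> k \<le> M \<and> 1 \<le> l \<and> l \<le> M}"

end

theory Submission
  imports Defs "HOL-Real_Asymp.Real_Asymp"
begin

text \<open>
  Both probabilities even decay exponentially in M, uniformly in j. Either event forces some F_{k,j,l} with max k l > M to have its root below t.
  That root is below t iff a weighted sum of at most k + l of the X_i, with weights in [0, 1]
  adding up to (k + l)/2, is below t^2 (k + l)/2. Truncating the X_i at a level K whose
  truncated mean still exceeds t^2 (possible because t < 1 = E X_i), Hoeffding's inequality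
  bounds this probability by a^(k + l) for some a < 1, and summing over the admissible k, l
  gives a bound of order a^M.
\<close>

section \<open>The roots for a fixed realisation\<close>

definition Fsum :: "(int \<Rightarrow> real) \<Rightarrow> nat \<Rightarrow> int \<Rightarrow> nat \<Rightarrow> real" where
  "Fsum x p j q = (1 / real p) * (\<Sum>i\<in>{1..<p}. real (p - i) * x (j + int i + 1))
   + (1 / real q) * (\<Sum>i\<in>{1..<q}. real (q - i) * x (j - int i + 1)) + x (j + 1)"

lemma Ffun_eq_Fsum: "Ffun x p j q s = Fsum x p j q - (real p + real q) / 2 * s\<^sup>2"
  unfolding Ffun_def Fsum_def by simp

lemma Fsum_nonneg: "(\<And>i. x i \<ge> 0) \<Longrightarrow> Fsum x p j q \<ge> 0"
  unfolding Fsum_def by (intro add_nonneg_nonneg mult_nonneg_nonneg sum_nonneg) auto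

lemma Froot_eq_sqrt:
  assumes "\<And>i. x i \<ge> 0" "p \<ge> 1" "q \<ge> 1"
  shows "Froot x p j q = sqrt (2 * Fsum x p j q / (real p + real q))"
  unfolding Froot_def
proof (rule the_equality)
  have "Fsum x p j q \<ge> 0" using Fsum_nonneg assms(1) by blast
  then show "0 \<le> sqrt (2 * Fsum x p j q / (real p + real q)) \<and>
      Ffun x p j q (sqrt (2 * Fsum x p j q / (real p + real q))) = 0"
    using assms(2,3) by (simp add: Ffun_eq_Fsum)
next
  fix s assume "0 \<le> s \<and> Ffun x p j q s = 0"
  then have "s \<ge> 0" "s\<^sup>2 = 2 * Fsum x p j q / (real p + real q)"
    using assms(2,3) by (auto simp: Ffun_eq_Fsum field_simps)
  then show "s = sqrt (2 * Fsum x p j q / (real p + real q))"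
    by (metis real_sqrt_unique)
qed

lemma Froot_nonneg: "(\<And>i. x i \<ge> 0) \<Longrightarrow> p \<ge> 1 \<Longrightarrow> q \<ge> 1 \<Longrightarrow> Froot x p j q \<ge> 0"
  by (simp add: Froot_eq_sqrt Fsum_nonneg)

lemma Froot_less_iff:
  assumes "\<And>i. x i \<ge> 0" "p \<ge> 1" "q \<ge> 1" "t \<ge> 0"
  shows "Froot x p j q < t \<longleftrightarrow> Fsum x p j q < t\<^sup>2 * ((real p + real q) / 2)"
proof -
  have "Froot x p j q < t \<longleftrightarrow> sqrt (2 * Fsum x p j q / (real p + real q)) < sqrt (t\<^sup>2)"
    using assms by (simp add: Froot_eq_sqrt)
  also have "\<dots> \<longleftrightarrow> 2 * Fsum x p j q / (real p + real q) < t\<^sup>2"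
    by (rule real_sqrt_less_iff)
  also have "\<dots> \<longleftrightarrow> Fsum x p j q < t\<^sup>2 * ((real p + real q) / 2)"
    using assms(2,3) by (simp add: field_simps)
  finally show ?thesis .
qed

definition window :: "nat \<Rightarrow> int \<Rightarrow> nat \<Rightarrow> int set" where
  "window p j q = (\<lambda>i. j + int i + 1) ` {1..<p} \<union> (\<lambda>i. j - int i + 1) ` {1..<q} \<union> {j + 1}"

definition weight :: "nat \<Rightarrow> int \<Rightarrow> nat \<Rightarrow> int \<Rightarrow> real" where
  "weight p j q n = (if n > j + 1 then real (p - nat (n - j - 1)) / p
                     else if n < j + 1 then real (q - nat (j + 1 - n)) / q else 1)"

lemma finite_window: "finite (window p j q)"
  unfolding window_def by auto

lemma card_window_le:
  assumes "p \<ge> 1" "q \<ge> 1"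
  shows "card (window p j q) \<le> p + q"
proof -
  have "card (window p j q) \<le> card ((\<lambda>i. j + int i + 1) ` {1..<p}) + card ((\<lambda>i. j - int i + 1) ` {1..<q}) + 1"
    unfolding window_def by (intro order_trans[OF card_Un_le] add_mono card_Un_le) auto
  also have "\<dots> \<le> (p - 1) + (q - 1) + 1"
    by (intro add_mono card_image_le[THEN order_trans]) auto
  finally show ?thesis using assms by linarith
qed

lemma weight_bounds: "p \<ge> 1 \<Longrightarrow> q \<ge> 1 \<Longrightarrow> 0 \<le> weight p j q n \<and> weight p j q n \<le> 1"
  unfolding weight_def by (auto simp: divide_simps)

lemma Fsum_eq_weighted_sum: "Fsum x p j q = (\<Sum>n\<in>window p j q. weight p j q n * x n)"
proof -
  let ?A = "(\<lambda>i. j + int i + 1) ` {1..<p}" and ?B = "(\<lambda>i. j - int i + 1) ` {1..<q}"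
  have "(\<Sum>n\<in>?A. weight p j q n * x n) = (\<Sum>i\<in>{1..<p}. weight p j q (j + int i + 1) * x (j + int i + 1))"
    by (subst sum.reindex) (auto simp: inj_on_def)
  also have "\<dots> = (1 / real p) * (\<Sum>i\<in>{1..<p}. real (p - i) * x (j + int i + 1))"
    by (auto simp: weight_def sum_distrib_left intro!: sum.cong)
  finally have A: "(\<Sum>n\<in>?A. weight p j q n * x n) = \<dots>" .
  have "(\<Sum>n\<in>?B. weight p j q n * x n) = (\<Sum>i\<in>{1..<q}. weight p j q (j - int i + 1) * x (j - int i + 1))"
    by (subst sum.reindex) (auto simp: inj_on_def)
  also have "\<dots> = (1 / real q) * (\<Sum>i\<in>{1..<q}. real (q - i) * x (j - int i + 1))"
    by (auto simp: weight_def sum_distrib_left intro!: sum.cong)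
  finally have B: "(\<Sum>n\<in>?B. weight p j q n * x n) = \<dots>" .
  have "(\<Sum>n\<in>window p j q. weight p j q n * x n)
      = (\<Sum>n\<in>?A. weight p j q n * x n) + (\<Sum>n\<in>?B. weight p j q n * x n) + weight p j q (j + 1) * x (j + 1)"
  proof -
    have "?A \<inter> ?B = {}" "(?A \<union> ?B) \<inter> {j + 1} = {}" by auto
    then show ?thesis unfolding window_def by (simp add: sum.union_disjoint)
  qed
  then show ?thesis using A B by (simp add: Fsum_def weight_def)
qed

lemma sum_of_nat_diff: "(\<Sum>i\<in>{1..<p}. real (p - i)) = real p * (real p - 1) / 2"
proof (induction p)
  case (Suc p)
  have "(\<Sum>i\<in>{1..<Suc p}. real (Suc p - i)) = (\<Sum>i\<in>{1..<Suc p}. real (p - i)) + p"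
    by (simp add: sum.distrib Suc_diff_le)
  also have "(\<Sum>i\<in>{1..<Suc p}. real (p - i)) = (\<Sum>i\<in>{1..<p}. real (p - i))"
    by (cases p) (auto simp: sum.atLeastLessThan_Suc)
  finally show ?case using Suc by (simp add: field_simps)
qed simp

lemma Fsum_one: "p \<ge> 1 \<Longrightarrow> q \<ge> 1 \<Longrightarrow> Fsum (\<lambda>_. 1) p j q = (real p + real q) / 2"
  unfolding Fsum_def mult_1_right sum_of_nat_diff by (simp add: field_simps)

section \<open>Where T_j and its truncation differ\<close>

lemma finite_TM_candidates: "finite {Froot x k j l | k l. 1 \<le> k \<and> k \<le> m \<and> 1 \<le> l \<and> l \<le> m}"
proof -
  have "{Froot x k j l | k l. 1 \<le> k \<and> k \<le> m \<and> 1 \<le> l \<and> l \<le> m}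
      = (\<lambda>(k, l). Froot x k j l) ` ({1..m} \<times> {1..m})"
    by force
  then show ?thesis by simp
qed

lemma Tinf_le_TM:
  assumes "\<And>i. x i \<ge> 0" "m \<ge> 1"
  shows "Tinf x j \<le> TM x m j"
proof -
  let ?B = "{Froot x k j l | k l. 1 \<le> k \<and> k \<le> m \<and> 1 \<le> l \<and> l \<le> m}"
  have "finite ?B" by (rule finite_TM_candidates)
  moreover have "?B \<noteq> {}" using assms(2) by blast
  ultimately have "Min ?B \<in> ?B" by (rule Min_in)
  then have "Min ?B \<in> {Froot x k j l | k l. k \<ge> 1 \<and> l \<ge> 1}" by blast
  moreover have "bdd_below {Froot x k j l | k l. k \<ge> 1 \<and> l \<ge> 1}"
    unfolding bdd_below_def using Froot_nonneg[OF assms(1)] by (intro exI[of _ 0]) auto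
  ultimately show ?thesis unfolding Tinf_def TM_def by (rule cInf_lower)
qed

definition far_root_below :: "(int \<Rightarrow> real) \<Rightarrow> real \<Rightarrow> int \<Rightarrow> nat \<Rightarrow> bool" where
  "far_root_below x t j m \<longleftrightarrow> (\<exists>k l. 1 \<le> k \<and> 1 \<le> l \<and> (m < k \<or> m < l) \<and> Froot x k j l < t)"

lemma far_root_below_mono: "far_root_below x s j m \<Longrightarrow> s \<le> t \<Longrightarrow> far_root_below x t j m"
  unfolding far_root_below_def by fastforce

lemma far_root_below_if_Tinf_less:
  assumes "Tinf x j < t" "Tinf x j < TM x m j"
  shows "far_root_below x t j m"
proof -
  have ne: "{Froot x k j l | k l. k \<ge> 1 \<and> l \<ge> 1} \<noteq> {}" by blast
  have lt: "Inf {Froot x k j l | k l. k \<ge> 1 \<and> l \<ge> 1} < min t (TM x m j)"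
    using assms unfolding min_less_iff_conj Tinf_def[symmetric] by blast
  obtain k l where "k \<ge> 1" "l \<ge> 1" "Froot x k j l < min t (TM x m j)"
    using cInf_lessD[OF ne lt] by blast
  then have kl: "k \<ge> 1" "l \<ge> 1" "Froot x k j l < t" "Froot x k j l < TM x m j"
    by simp_all
  let ?B = "{Froot x k j l | k l. 1 \<le> k \<and> k \<le> m \<and> 1 \<le> l \<and> l \<le> m}"
  have "m < k \<or> m < l"
  proof (rule ccontr)
    assume "\<not> (m < k \<or> m < l)"
    then have "k \<le> m" "l \<le> m" by simp_all
    then have "Froot x k j l \<in> ?B" using kl by blast
    then have "TM x m j \<le> Froot x k j l" unfolding TM_def using finite_TM_candidates by (rule Min_le[rotated])
    with kl show False by simp
  qed
  then show ?thesis unfolding far_root_below_def using kl by blast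
qed

lemma far_root_below_if_disagree:
  assumes "\<And>i. x i \<ge> 0" "m \<ge> 1"
    and "(t \<le> Tinf x j) \<noteq> (t \<le> TM x m j) \<or> (Tinf x j \<noteq> TM x m j \<and> TM x m j \<le> t)"
  shows "far_root_below x t j m"
  using assms(3) Tinf_le_TM[where x = x and m = m and j = j, OF assms(1,2)]
  by (intro far_root_below_if_Tinf_less) auto

section \<open>Geometric union bounds\<close>

lemma (in finite_measure) measure_UN_le_geometric:
  assumes "range A \<subseteq> sets M" "\<And>i. measure M (A i) \<le> c * a ^ i" "0 \<le> a" "a < 1"
  shows "measure M (\<Union>i. A i) \<le> c / (1 - a)"
proof -
  have sg: "summable (\<lambda>i. c * a ^ i)" using assms by (intro summable_mult summable_geometric) auto
  have sm: "summable (\<lambda>i. measure M (A i))"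
    by (rule summable_comparison_test'[OF sg]) (use assms(2) in auto)
  have "measure M (\<Union>i. A i) \<le> (\<Sum>i. measure M (A i))"
    by (rule finite_measure_subadditive_countably[OF assms(1) sm])
  also have "\<dots> \<le> (\<Sum>i. c * a ^ i)" by (rule suminf_le[OF assms(2) sm sg])
  also have "\<dots> = c / (1 - a)" using assms by (simp add: suminf_mult suminf_geometric divide_simps)
  finally show ?thesis .
qed

lemma (in finite_measure) measure_UN_UN_le_geometric:
  assumes "\<And>i i'. A i i' \<in> sets M" "\<And>i i'. measure M (A i i') \<le> c * a ^ i * a ^ i'"
    "0 \<le> a" "a < 1"
  shows "measure M (\<Union>i. \<Union>i'. A i i') \<le> c / (1 - a)\<^sup>2"
proof -
  have "measure M (\<Union>i'. A i i') \<le> c * a ^ i / (1 - a)" for i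
    using assms by (intro measure_UN_le_geometric) auto
  then have "measure M (\<Union>i. \<Union>i'. A i i') \<le> c / (1 - a) / (1 - a)"
    using assms by (intro measure_UN_le_geometric) (auto simp: field_simps)
  then show ?thesis by (simp add: power2_eq_square)
qed

section \<open>Exponential decay of the disagreement probability\<close>

locale nonneg_iid_mean_one = prob_space M for M :: "'a measure" +
  fixes X :: "int \<Rightarrow> 'a \<Rightarrow> real"
  assumes measurable_X[measurable]: "\<And>i. X i \<in> borel_measurable M"
  and indep_X: "indep_vars (\<lambda>_. borel) X UNIV"
  and distr_X: "\<And>i. distr M borel (X i) = distr M borel (X 0)"
  and X_nonneg: "\<And>i \<omega>. \<omega> \<in> space M \<Longrightarrow> X i \<omega> \<ge> 0"
  and integrable_X: "integrable M (X 0)" and expectation_X: "expectation (X 0) = 1"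
begin

lemma expectation_min_eq: "expectation (\<lambda>\<omega>. min (X n \<omega>) K) = expectation (\<lambda>\<omega>. min (X 0 \<omega>) K)"
proof -
  have "expectation (\<lambda>\<omega>. min (X n \<omega>) K) = integral\<^sup>L (distr M borel (X n)) (\<lambda>x. min x K)"
    by (rule integral_distr[symmetric]) auto
  also have "\<dots> = expectation (\<lambda>\<omega>. min (X 0 \<omega>) K)"
    by (simp add: distr_X[of n] integral_distr)
  finally show ?thesis .
qed

lemma exists_truncation_mean_gt:
  assumes "c < 1"
  obtains K :: real where "K > 0" "expectation (\<lambda>\<omega>. min (X 0 \<omega>) K) > c"
proof -
  have "(\<lambda>n::nat. expectation (\<lambda>\<omega>. min (X 0 \<omega>) (real n))) \<longlonglongrightarrow> expectation (X 0)"
  proof (rule integral_dominated_convergence[where w = "X 0"])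
    show "AE \<omega> in M. (\<lambda>n. min (X 0 \<omega>) (real n)) \<longlonglongrightarrow> X 0 \<omega>"
    proof (rule AE_I2, rule tendsto_eventually)
      fix \<omega>
      show "\<forall>\<^sub>F n in sequentially. min (X 0 \<omega>) (real n) = X 0 \<omega>"
        using eventually_ge_at_top[of "nat \<lceil>X 0 \<omega>\<rceil>"]
        by eventually_elim (smt (verit) le_nat_iff of_nat_le_iff real_nat_ceiling_ge)
    qed
    show "AE \<omega> in M. norm (min (X 0 \<omega>) (real n)) \<le> X 0 \<omega>" for n
      by (rule AE_I2) (use X_nonneg[of _ 0] in auto)
  qed (auto simp: integrable_X)
  then have "\<forall>\<^sub>F n in sequentially. expectation (\<lambda>\<omega>. min (X 0 \<omega>) (real n)) > c"
    using assms expectation_X by (auto dest: order_tendstoD)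
  from eventually_conj[OF this eventually_ge_at_top[of 1]]
  obtain n :: nat where "n \<ge> 1" "expectation (\<lambda>\<omega>. min (X 0 \<omega>) (real n)) > c"
    by (auto simp: eventually_sequentially)
  then show ?thesis using that[of "real n"] by simp
qed

lemma measurable_Froot[measurable]:
  assumes "k \<ge> 1" "l \<ge> 1"
  shows "(\<lambda>\<omega>. Froot (\<lambda>i. X i \<omega>) k j l) \<in> borel_measurable M"
proof (rule measurable_cong[THEN iffD2])
  show "\<omega> \<in> space M \<Longrightarrow> Froot (\<lambda>i. X i \<omega>) k j l = sqrt (2 * Fsum (\<lambda>i. X i \<omega>) k j l / (real k + real l))"
    for \<omega> using Froot_eq_sqrt[OF _ assms] X_nonneg by auto
  show "(\<lambda>\<omega>. sqrt (2 * Fsum (\<lambda>i. X i \<omega>) k j l / (real k + real l))) \<in> borel_measurable M"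
    unfolding Fsum_def by measurable
qed

lemma prob_truncated_window_sum_le:
  assumes "K > 0" "\<delta> \<ge> 0" "k \<ge> 1" "l \<ge> 1"
  shows "prob {\<omega>\<in>space M. (\<Sum>n\<in>window k j l. weight k j l n * min (X n \<omega>) K)
                \<le> (expectation (\<lambda>\<omega>. min (X 0 \<omega>) K) - \<delta>) * ((real k + real l) / 2)}
         \<le> exp (- (\<delta>\<^sup>2 / (2 * K\<^sup>2)) * (real k + real l))"
proof -
  define I where "I = window k j l"
  define Z where "Z = (\<lambda>n \<omega>. weight k j l n * min (X n \<omega>) K)"
  define \<epsilon> where "\<epsilon> = \<delta> * ((real k + real l) / 2)"
  have w: "0 \<le> weight k j l n" "weight k j l n \<le> 1" for n
    using weight_bounds assms(3,4) by auto
  interpret H: Hoeffding_ineq M I Z "\<lambda>_. 0" "\<lambda>_. K" "\<Sum>n\<in>I. expectation (Z n)"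
  proof unfold_locales
    show "finite I" by (simp add: I_def finite_window)
    have "indep_vars (\<lambda>_. borel) Z UNIV"
      unfolding Z_def by (rule indep_vars_compose2[OF indep_X]) auto
    then show "indep_vars (\<lambda>_. borel) Z I" by (rule indep_vars_subset) auto
    show "AE \<omega> in M. Z n \<omega> \<in> {0..K}" for n
    proof (rule AE_I2)
      fix \<omega> assume "\<omega> \<in> space M"
      then have "0 \<le> min (X n \<omega>) K" "min (X n \<omega>) K \<le> K" using X_nonneg \<open>K > 0\<close> by auto
      then show "Z n \<omega> \<in> {0..K}"
        using w[of n] mult_mono[of "weight k j l n" 1 "min (X n \<omega>) K" K] by (auto simp: Z_def)
    qed
  qed simp
  have "expectation (Z n) = expectation (\<lambda>\<omega>. min (X 0 \<omega>) K) * (weight k j l n * 1)" for n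
    unfolding Z_def by (simp add: expectation_min_eq[of n])
  then have "(\<Sum>n\<in>I. expectation (Z n)) = expectation (\<lambda>\<omega>. min (X 0 \<omega>) K) * Fsum (\<lambda>_. 1) k j l"
    unfolding I_def Fsum_eq_weighted_sum sum_distrib_left by simp
  then have mean_Z: "(\<Sum>n\<in>I. expectation (Z n)) - \<epsilon>
      = (expectation (\<lambda>\<omega>. min (X 0 \<omega>) K) - \<delta>) * ((real k + real l) / 2)"
    using Fsum_one assms(3,4) by (simp add: \<epsilon>_def left_diff_distrib)
  have "j + 1 \<in> I" unfolding I_def window_def by blast
  then have card_I: "0 < card I" "card I \<le> k + l"
    using card_window_le[OF assms(3,4), of j] finite_window[of k j l] by (auto simp: I_def card_gt_0_iff)
  have "prob {\<omega>\<in>space M. (\<Sum>n\<in>I. Z n \<omega>) \<le> (\<Sum>n\<in>I. expectation (Z n)) - \<epsilon>}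
      \<le> exp (-2 * \<epsilon>\<^sup>2 / (\<Sum>n\<in>I. (K - 0)\<^sup>2))"
    using assms card_I by (intro H.Hoeffding_ineq_le) (auto simp: \<epsilon>_def)
  also have "\<dots> \<le> exp (-2 * \<epsilon>\<^sup>2 / ((real k + real l) * K\<^sup>2))"
    using card_I \<open>K > 0\<close> by (auto intro!: divide_left_mono mult_right_mono)
  also have "\<dots> = exp (- (\<delta>\<^sup>2 / (2 * K\<^sup>2)) * (real k + real l))"
  proof -
    have "2 * (\<delta> * (y / 2))\<^sup>2 / (y * K\<^sup>2) = \<delta>\<^sup>2 / (2 * K\<^sup>2) * y" if "y > 0" for y :: real
      using that \<open>K > 0\<close> by (simp add: field_simps power2_eq_square)
    from this[of "real k + real l"] show ?thesis using assms(3) by (simp add: \<epsilon>_def)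
  qed
  finally show ?thesis unfolding mean_Z by (simp only: I_def Z_def)
qed

lemma prob_Froot_less_le:
  assumes "t > 0" "K > 0" and mean: "expectation (\<lambda>\<omega>. min (X 0 \<omega>) K) > t\<^sup>2"
    and "k \<ge> 1" "l \<ge> 1"
  shows "prob {\<omega>\<in>space M. Froot (\<lambda>i. X i \<omega>) k j l < t}
     \<le> exp (- ((expectation (\<lambda>\<omega>. min (X 0 \<omega>) K) - t\<^sup>2)\<^sup>2 / (2 * K\<^sup>2)) * (real k + real l))"
proof -
  let ?S = "\<lambda>\<omega>. \<Sum>n\<in>window k j l. weight k j l n * min (X n \<omega>) K"
  let ?\<mu> = "expectation (\<lambda>\<omega>. min (X 0 \<omega>) K)"
  have "{\<omega>\<in>space M. Froot (\<lambda>i. X i \<omega>) k j l < t}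
      \<subseteq> {\<omega>\<in>space M. ?S \<omega> \<le> (?\<mu> - (?\<mu> - t\<^sup>2)) * ((real k + real l) / 2)}"
  proof safe
    fix \<omega> assume "\<omega> \<in> space M" and "Froot (\<lambda>i. X i \<omega>) k j l < t"
    then have "Fsum (\<lambda>i. X i \<omega>) k j l < t\<^sup>2 * ((real k + real l) / 2)"
      using Froot_less_iff[of "\<lambda>i. X i \<omega>"] X_nonneg assms(1,4,5) by simp
    moreover have "?S \<omega> \<le> Fsum (\<lambda>i. X i \<omega>) k j l"
      unfolding Fsum_eq_weighted_sum using weight_bounds[OF assms(4,5)]
      by (intro sum_mono mult_left_mono) auto
    ultimately show "?S \<omega> \<le> (?\<mu> - (?\<mu> - t\<^sup>2)) * ((real k + real l) / 2)"
      by simp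
  qed
  then have "prob {\<omega>\<in>space M. Froot (\<lambda>i. X i \<omega>) k j l < t}
      \<le> prob {\<omega>\<in>space M. ?S \<omega> \<le> (?\<mu> - (?\<mu> - t\<^sup>2)) * ((real k + real l) / 2)}"
    by (intro finite_measure_mono) auto
  also have "\<dots> \<le> exp (- ((?\<mu> - t\<^sup>2)\<^sup>2 / (2 * K\<^sup>2)) * (real k + real l))"
    using assms by (intro prob_truncated_window_sum_le) auto
  finally show ?thesis .
qed

definition root_below_event :: "real \<Rightarrow> int \<Rightarrow> nat \<Rightarrow> nat \<Rightarrow> 'a set" where
  "root_below_event t j k l = {\<omega>\<in>space M. Froot (\<lambda>i. X i \<omega>) k j l < t}"

definition far_root_event :: "real \<Rightarrow> int \<Rightarrow> nat \<Rightarrow> 'a set" where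
  "far_root_event t j m = {\<omega>\<in>space M. far_root_below (\<lambda>i. X i \<omega>) t j m}"

lemma sets_root_below_event: "k \<ge> 1 \<Longrightarrow> l \<ge> 1 \<Longrightarrow> root_below_event t j k l \<in> sets M"
  unfolding root_below_event_def by measurable

lemma root_below_event_subset_far_root_event:
  "1 \<le> k \<Longrightarrow> 1 \<le> l \<Longrightarrow> m < k \<or> m < l \<Longrightarrow> root_below_event t j k l \<subseteq> far_root_event t j m"
  unfolding root_below_event_def far_root_event_def far_root_below_def by blast

lemma far_root_event_eq_UN:
  "far_root_event t j m = (\<Union>i. \<Union>i'. root_below_event t j (m + 1 + i) (Suc i'))
                          \<union> (\<Union>i. \<Union>i'. root_below_event t j (Suc i') (m + 1 + i))"
proof (rule equalityI[OF subsetI])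
  fix \<omega> assume "\<omega> \<in> far_root_event t j m"
  then obtain k l where kl: "\<omega> \<in> space M" "1 \<le> k" "1 \<le> l" "m < k \<or> m < l" "Froot (\<lambda>i. X i \<omega>) k j l < t"
    unfolding far_root_event_def far_root_below_def by blast
  then consider "\<omega> \<in> root_below_event t j (m + 1 + (k - m - 1)) (Suc (l - 1))"
    | "\<omega> \<in> root_below_event t j (Suc (k - 1)) (m + 1 + (l - m - 1))"
    by (cases "m < k") (auto simp: root_below_event_def)
  then show "\<omega> \<in> (\<Union>i. \<Union>i'. root_below_event t j (m + 1 + i) (Suc i'))
                  \<union> (\<Union>i. \<Union>i'. root_below_event t j (Suc i') (m + 1 + i))"
    by cases blast+
next
  show "(\<Union>i. \<Union>i'. root_below_event t j (m + 1 + i) (Suc i'))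
      \<union> (\<Union>i. \<Union>i'. root_below_event t j (Suc i') (m + 1 + i)) \<subseteq> far_root_event t j m"
    by (intro Un_least UN_least root_below_event_subset_far_root_event) auto
qed

lemma sets_far_root_event: "far_root_event t j m \<in> sets M"
  unfolding far_root_event_eq_UN
  by (intro sets.Un) (simp_all add: sets.countable_UN image_subset_iff sets_root_below_event)

lemma far_root_event_mono: "s \<le> t \<Longrightarrow> far_root_event s j m \<subseteq> far_root_event t j m"
  unfolding far_root_event_def using far_root_below_mono by blast

lemma far_root_event_exp_decay_pos:
  assumes "0 < t" "t < 1"
  shows "\<exists>C \<beta>. \<beta> > 0 \<and> (\<forall>j m. prob (far_root_event t j m) \<le> C * exp (- \<beta> * real m))"
proof -
  have "t\<^sup>2 < 1" using assms by (simp add: power_less_one_iff abs_less_iff)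
  then obtain K where K: "K > 0" "expectation (\<lambda>\<omega>. min (X 0 \<omega>) K) > t\<^sup>2"
    using exists_truncation_mean_gt by blast
  define \<beta> where "\<beta> = (expectation (\<lambda>\<omega>. min (X 0 \<omega>) K) - t\<^sup>2)\<^sup>2 / (2 * K\<^sup>2)"
  define a where "a = exp (- \<beta>)"
  have "\<beta> > 0" using K by (simp add: \<beta>_def)
  then have a: "0 \<le> a" "a < 1" by (auto simp: a_def)
  have pow_a: "exp (- \<beta> * real n) = a ^ n" for n
    by (simp add: a_def algebra_simps flip: exp_of_nat_mult)
  have root_below: "prob (root_below_event t j k l) \<le> a ^ (k + l)" if "k \<ge> 1" "l \<ge> 1" for j k l
    using prob_Froot_less_le[OF assms(1) K that] pow_a[of "k + l"]
    by (simp add: root_below_event_def \<beta>_def)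
  have "prob (far_root_event t j m) \<le> 2 / (1 - a)\<^sup>2 * exp (- \<beta> * real m)" for j m
  proof -
    have "prob (far_root_event t j m) \<le> a ^ (m + 2) / (1 - a)\<^sup>2 + a ^ (m + 2) / (1 - a)\<^sup>2"
      unfolding far_root_event_eq_UN
    proof (intro measure_Un_le[THEN order_trans] add_mono measure_UN_UN_le_geometric a)
      fix i i'
      show "prob (root_below_event t j (m + 1 + i) (Suc i')) \<le> a ^ (m + 2) * a ^ i * a ^ i'"
        and "prob (root_below_event t j (Suc i') (m + 1 + i)) \<le> a ^ (m + 2) * a ^ i * a ^ i'"
        using root_below[of "m + 1 + i" "Suc i'" j] root_below[of "Suc i'" "m + 1 + i" j]
        by (simp_all add: power_add mult_ac)
    qed (simp_all add: sets.countable_UN image_subset_iff sets_root_below_event)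
    also have "\<dots> \<le> 2 / (1 - a)\<^sup>2 * exp (- \<beta> * real m)"
      using power_decreasing[of m "m + 2" a] a unfolding pow_a by (simp add: field_simps)
    finally show ?thesis .
  qed
  with \<open>\<beta> > 0\<close> show ?thesis by blast
qed

lemma far_root_event_exp_decay:
  assumes "t < 1"
  shows "\<exists>C \<beta>. \<beta> > 0 \<and> (\<forall>j m. prob (far_root_event t j m) \<le> C * exp (- \<beta> * real m))"
proof -
  define t' where "t' = max t (1 / 2)"
  have "0 < t'" "t' < 1" using assms by (auto simp: t'_def)
  then obtain C \<beta> where "\<beta> > 0" "\<forall>j m. prob (far_root_event t' j m) \<le> C * exp (- \<beta> * real m)"
    using far_root_event_exp_decay_pos by blast
  moreover have "prob (far_root_event t j m) \<le> prob (far_root_event t' j m)" for j m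
    by (intro finite_measure_mono far_root_event_mono sets_far_root_event) (simp add: t'_def)
  ultimately show ?thesis by (meson order_trans)
qed

end

section \<open>From exponential decay to the polynomial rate\<close>

lemma bounded_exp_decay_times_powr:
  assumes "\<beta> > 0"
  obtains B where "\<And>m::nat. norm (exp (- \<beta> * real m) * real m powr a) \<le> B"
proof -
  have "(\<lambda>m::nat. exp (- \<beta> * real m) * real m powr a) \<longlonglongrightarrow> 0"
    using assms by real_asymp
  then have "Bseq (\<lambda>m::nat. exp (- \<beta> * real m) * real m powr a)"
    by (rule convergent_imp_Bseq[OF convergentI])
  then show ?thesis using that unfolding Bseq_def by blast
qed

lemma exp_decay_imp_powr_bound:
  fixes g :: "real \<Rightarrow> 'j \<Rightarrow> nat \<Rightarrow> real" and \<gamma> :: real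
  assumes mono: "\<And>s t j m. s \<le> t \<Longrightarrow> g s j m \<le> g t j m"
    and decay: "\<And>t. t < 1 \<Longrightarrow> \<exists>C \<beta>. \<beta> > 0 \<and> (\<forall>j m. g t j m \<le> C * exp (- \<beta> * real m))"
  shows "\<exists>\<rho>. mono_on {0<..<1} \<rho> \<and>
           (\<forall>t\<in>{0<..<1}. \<forall>j m. m \<ge> 1 \<longrightarrow> g t j m \<le> \<rho> t * real m powr (1 - \<gamma>))"
proof -
  define f where "f t p = g t (fst p) (snd p) * real (snd p) powr (\<gamma> - 1)" for t p
  define A :: "('j \<times> nat) set" where "A = UNIV \<times> {1..}"
  have bdd: "bdd_above (f t ` A)" if t: "t < 1" for t
  proof -
    obtain C \<beta> where "\<beta> > 0" and C: "\<And>j m. g t j m \<le> C * exp (- \<beta> * real m)"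
      using decay[OF t] by blast
    obtain B where B: "\<And>m::nat. norm (exp (- \<beta> * real m) * real m powr (\<gamma> - 1)) \<le> B"
      using bounded_exp_decay_times_powr[OF \<open>\<beta> > 0\<close>, where a = "\<gamma> - 1"] by blast
    have "f t (j, m) \<le> \<bar>C\<bar> * B" for j m
    proof -
      have "f t (j, m) \<le> C * exp (- \<beta> * real m) * real m powr (\<gamma> - 1)"
        unfolding f_def prod.sel by (rule mult_right_mono[OF C]) simp
      also have "\<dots> = C * (exp (- \<beta> * real m) * real m powr (\<gamma> - 1))"
        by (rule mult.assoc)
      also have "\<dots> \<le> \<bar>C\<bar> * norm (exp (- \<beta> * real m) * real m powr (\<gamma> - 1))"
        unfolding real_norm_def abs_mult[symmetric] by (rule abs_ge_self)
      also have "\<dots> \<le> \<bar>C\<bar> * B"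
        using B[of m] by (rule mult_left_mono) simp
      finally show ?thesis .
    qed
    then show ?thesis by (intro bdd_aboveI2[where M = "\<bar>C\<bar> * B"]) (metis surj_pair)
  qed
  define \<rho> where "\<rho> t = (SUP p\<in>A. f t p)" for t
  have "mono_on {0<..<1} \<rho>"
  proof (rule mono_onI)
    fix s t :: real assume "s \<in> {0<..<1}" "t \<in> {0<..<1}" "s \<le> t"
    have "f s p \<le> f t p" for p
      unfolding f_def using \<open>s \<le> t\<close> by (intro mult_right_mono mono) simp_all
    then show "\<rho> s \<le> \<rho> t" unfolding \<rho>_def
      using \<open>t \<in> {0<..<1}\<close> by (intro cSUP_mono bdd) (auto simp: A_def)
  qed
  moreover have "g t j m \<le> \<rho> t * real m powr (1 - \<gamma>)" if "t < 1" "m \<ge> 1" for t j m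
  proof -
    have "g t j m = f t (j, m) * real m powr (1 - \<gamma>)"
      using that by (simp add: f_def powr_add[symmetric])
    also have "\<dots> \<le> \<rho> t * real m powr (1 - \<gamma>)"
      unfolding \<rho>_def using that by (intro mult_right_mono cSUP_upper bdd) (auto simp: A_def)
    finally show ?thesis .
  qed
  ultimately show ?thesis by auto
qed

lemma exp_decay_imp_smallo_powr:
  fixes f :: "nat \<Rightarrow> real"
  assumes "\<beta> > 0" "\<forall>\<^sub>F m in sequentially. \<bar>f m\<bar> \<le> C * exp (- \<beta> * real m)"
  shows "f \<in> o(\<lambda>m. real m powr a)"
proof -
  have "f \<in> O(\<lambda>m. exp (- \<beta> * real m))"
    using assms(2) by (intro bigoI[of _ C]) simp
  moreover have "(\<lambda>m::nat. exp (- \<beta> * real m)) \<in> o(\<lambda>m. real m powr a)"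
    using assms(1) by real_asymp
  ultimately show ?thesis by (rule landau_o.big_small_trans)
qed

lemma dominated_exp_decay_rates:
  fixes P g :: "real \<Rightarrow> 'j \<Rightarrow> nat \<Rightarrow> real" and \<gamma> :: real
  assumes dom: "\<And>t j m. m \<ge> 1 \<Longrightarrow> 0 \<le> P t j m \<and> P t j m \<le> g t j m"
    and mono: "\<And>s t j m. s \<le> t \<Longrightarrow> g s j m \<le> g t j m"
    and decay: "\<And>t. t < 1 \<Longrightarrow> \<exists>C \<beta>. \<beta> > 0 \<and> (\<forall>j m. g t j m \<le> C * exp (- \<beta> * real m))"
  shows "(\<exists>\<rho>. mono_on {0<..<1} \<rho> \<and>
            (\<forall>t\<in>{0<..<1}. \<forall>j m. m \<ge> 1 \<longrightarrow> P t j m \<le> \<rho> t * real m powr (1 - \<gamma>)))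
       \<and> (\<forall>t < 1. \<forall>j. (\<lambda>m. P t j m) \<in> o(\<lambda>m. real m powr (1 - \<gamma>)))"
proof (intro conjI allI impI)
  obtain \<rho> where "mono_on {0<..<1} \<rho>"
    and "\<forall>t\<in>{0<..<1}. \<forall>j m. m \<ge> 1 \<longrightarrow> g t j m \<le> \<rho> t * real m powr (1 - \<gamma>)"
    using exp_decay_imp_powr_bound[where g = g and \<gamma> = \<gamma>, OF mono decay] by blast
  with dom show "\<exists>\<rho>. mono_on {0<..<1} \<rho> \<and>
      (\<forall>t\<in>{0<..<1}. \<forall>j m. m \<ge> 1 \<longrightarrow> P t j m \<le> \<rho> t * real m powr (1 - \<gamma>))"
    by (meson order_trans)
next
  fix t :: real and j assume "t < 1"
  then obtain C \<beta> where "\<beta> > 0" and C: "\<forall>j m. g t j m \<le> C * exp (- \<beta> * real m)"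
    using decay by blast
  have "\<forall>\<^sub>F m in sequentially. \<bar>P t j m\<bar> \<le> C * exp (- \<beta> * real m)"
  proof (rule eventually_mono[OF eventually_ge_at_top[of 1]])
    fix m :: nat assume "1 \<le> m"
    with dom C show "\<bar>P t j m\<bar> \<le> C * exp (- \<beta> * real m)"
      by (metis abs_of_nonneg order_trans)
  qed
  with \<open>\<beta> > 0\<close> show "(\<lambda>m. P t j m) \<in> o(\<lambda>m. real m powr (1 - \<gamma>))"
    by (rule exp_decay_imp_smallo_powr)
qed

theorem lemma1:
  fixes M :: "'a measure" and X :: "int \<Rightarrow> 'a \<Rightarrow> real" and \<gamma> :: real
  assumes "prob_space M"
    and "\<And>i. X i \<in> borel_measurable M"
    and "prob_space.indep_vars M (\<lambda>_. borel) X UNIV"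
    and "\<And>i. distr M borel (X i) = distr M borel (X 0)"
    and "\<And>i \<omega>. \<omega> \<in> space M \<Longrightarrow> X i \<omega> \<ge> 0"
    and "integrable M (X 0)" and "prob_space.expectation M (X 0) = 1"
    and "\<gamma> \<ge> 1"
    and "integrable M (\<lambda>\<omega>. X 0 \<omega> powr \<gamma>)"
  shows "(\<exists>\<rho> :: real \<Rightarrow> real. mono_on {0<..<1} \<rho> \<and>
            (\<forall>t\<in>{0<..<1}. \<forall>j::int. \<forall>m::nat. m \<ge> 1 \<longrightarrow>
               max (measure M {\<omega> \<in> space M. (t \<le> Tinf (\<lambda>i. X i \<omega>) j) \<noteq> (t \<le> TM (\<lambda>i. X i \<omega>) m j)})
                   (measure M {\<omega> \<in> space M. Tinf (\<lambda>i. X i \<omega>) j \<noteq> TM (\<lambda>i. X i \<omega>) m j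
                                              \<and> TM (\<lambda>i. X i \<omega>) m j \<le> t})
               \<le> \<rho> t * real m powr (1 - \<gamma>)))
       \<and> (\<forall>t < 1. \<forall>j::int.
            (\<lambda>m::nat. max (measure M {\<omega> \<in> space M. (t \<le> Tinf (\<lambda>i. X i \<omega>) j) \<noteq> (t \<le> TM (\<lambda>i. X i \<omega>) m j)})
                   (measure M {\<omega> \<in> space M. Tinf (\<lambda>i. X i \<omega>) j \<noteq> TM (\<lambda>i. X i \<omega>) m j
                                              \<and> TM (\<lambda>i. X i \<omega>) m j \<le> t}))
            \<in> o(\<lambda>m. real m powr (1 - \<gamma>)))"
proof -
  interpret nonneg_iid_mean_one M X
    unfolding nonneg_iid_mean_one_def nonneg_iid_mean_one_axioms_def using assms by auto
  define P where "P t j m = max (measure M {\<omega> \<in> space M. (t \<le> Tinf (\<lambda>i. X i \<omega>) j) \<noteq> (t \<le> TM (\<lambda>i. X i \<omega>) m j)})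
                   (measure M {\<omega> \<in> space M. Tinf (\<lambda>i. X i \<omega>) j \<noteq> TM (\<lambda>i. X i \<omega>) m j
                                              \<and> TM (\<lambda>i. X i \<omega>) m j \<le> t})" for t j m
  have "0 \<le> P t j m \<and> P t j m \<le> prob (far_root_event t j m)" if "m \<ge> 1" for t j m
    unfolding P_def using X_nonneg far_root_below_if_disagree[OF _ that]
    by (auto simp: le_max_iff_disj intro!: finite_measure_mono sets_far_root_event)
       (auto simp: far_root_event_def)
  from dominated_exp_decay_rates[where g = "\<lambda>t j m. prob (far_root_event t j m)" and \<gamma> = \<gamma>,
      OF this finite_measure_mono[OF far_root_event_mono sets_far_root_event] far_root_event_exp_decay]
  show ?thesis unfolding P_def .
qed

end
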